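(* Let $k,n\ge 1$ and let $A$ be a $d\times d$ nonnegative matrix. Then $A\in P^*(k,n)$ if and only if $A\in P(k,n)$ and every $k$-tuple $(a_1,\dots,a_k)\in D^k$ has a common predecessor, i.e. there is $i\in D$ with $A(i,a_j)>0$ for all $j=1,\dots,k$.
   Context: Let $K=\{1,\dots,k\}$ and $D=\{1,\dots,d\}$. The $k$-tree $\tau$ is the set $K^*$ of all finite words over $K$; the empty word $\epsilon$ is the root, and for a word $x$ and $g\in K$ the word $xg$ is a child of $x$. $L_n$ denotes the set of words of length exactly $n$. Let $X_A=\{\lambda\in D^{\tau}: A(\lambda(x),\lambda(xg))>0 \text{ for all } x\in\tau,\ g\in K\}$. For $i\in D$ and $\mathcal T\subseteq\tau$, the arrival set is $\mathcal A(i,\epsilon,\mathcal T)=\{\lambda|_{\mathcal T}:\lambda\in X_A,\ \lambda(\epsilon)=i\}$. $A\in P(k,n)$ means $\mathcal A(i,\epsilon,L_n)=\mathcal A(j,\epsilon,L_n)$ for all $i,j\in D$. $A\in P^*(k,n)$ means $\mathcal A(i,\epsilon,L_n)=D^{L_n}$ for all $i\in D$. *)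

theory Defs
  imports Complex_Main "HOL-Library.FuncSet"
begin

text \<open>K = {1..k}, D = {1..d}. Words over K are lists; the k-tree tau is the set of all
finite words over K; the root is the empty list; x @ [g] is the g-th child of x.\<close>

definition tree :: "nat \<Rightarrow> nat list set" where
  "tree k = {x. set x \<subseteq> {1..k}}"

definition level :: "nat \<Rightarrow> nat \<Rightarrow> nat list set" where
  "level k n = {x \<in> tree k. length x = n}"

text \<open>X_A: labellings lambda of the tree by D with A(lambda x, lambda (x g)) > 0.
Labellings are taken extensional (undefined off the tree), so each corresponds to
exactly one element of D^tau.\<close>

definition XA :: "nat \<Rightarrow> nat \<Rightarrow> (nat \<Rightarrow> nat \<Rightarrow> real) \<Rightarrow> (nat list \<Rightarrow> nat) set" where
  "XA k d A = {lam \<in> tree k \<rightarrow>\<^sub>E {1..d}.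
      \<forall>x \<in> tree k. \<forall>g \<in> {1..k}. A (lam x) (lam (x @ [g])) > 0}"

definition arrival :: "nat \<Rightarrow> nat \<Rightarrow> (nat \<Rightarrow> nat \<Rightarrow> real) \<Rightarrow> nat \<Rightarrow> nat list set
    \<Rightarrow> (nat list \<Rightarrow> nat) set" where
  "arrival k d A i T = {restrict lam T | lam. lam \<in> XA k d A \<and> lam [] = i}"

definition inP :: "nat \<Rightarrow> nat \<Rightarrow> nat \<Rightarrow> (nat \<Rightarrow> nat \<Rightarrow> real) \<Rightarrow> bool" where
  "inP k n d A \<longleftrightarrow> (\<forall>i \<in> {1..d}. \<forall>j \<in> {1..d}.
      arrival k d A i (level k n) = arrival k d A j (level k n))"

definition inPstar :: "nat \<Rightarrow> nat \<Rightarrow> nat \<Rightarrow> (nat \<Rightarrow> nat \<Rightarrow> real) \<Rightarrow> bool" where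
  "inPstar k n d A \<longleftrightarrow> (\<forall>i \<in> {1..d}.
      arrival k d A i (level k n) = (level k n \<rightarrow>\<^sub>E {1..d}))"

end

theory Submission
  imports Defs
begin

text \<open>If every labelling of level n is reachable from every root, then labelling the children
of one node at level n - 1 by (a_1, ..., a_k) forces a common predecessor of the a_j.
Conversely, a choice of common predecessors lets one label the first n levels upwards from an
arbitrary labelling of level n.  Below level n one needs, for every symbol j, an infinite
labelling rooted at j: some infinite labelling exists because every symbol has a predecessor
and a self-map of a finite set has a periodic point (which yields a labelling that is constant
on levels), and property P transports its root to any other symbol.\<close>

lemma periodic_point_exists:
  assumes "finite S" and "f ` S \<subseteq> S" and "x \<in> S"
  shows "\<exists>c\<in>S. \<exists>m>0. (f ^^ m) c = c"
proof -
  have orbit_in: "(f ^^ t) x \<in> S" for t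
    by (induction t) (use assms(2,3) in auto)
  then have "finite (range (\<lambda>t. (f ^^ t) x))"
    using assms(1) by (meson finite_subset image_subsetI)
  then obtain a where "infinite {t. (f ^^ t) x = (f ^^ a) x}"
    using pigeonhole_infinite[of "UNIV :: nat set" "\<lambda>t. (f ^^ t) x"] by auto
  then obtain b where "b > a" and b: "(f ^^ b) x = (f ^^ a) x"
    unfolding finite_nat_set_iff_bounded_le by (auto simp: not_le)
  have "(f ^^ (b - a)) ((f ^^ a) x) = (f ^^ (b - a + a)) x"
    by (simp only: funpow_add o_apply)
  also have "\<dots> = (f ^^ a) x"
    using \<open>b > a\<close> b by simp
  finally show ?thesis
    using orbit_in \<open>b > a\<close> zero_less_diff by blast
qed

text \<open>The backward orbit runs backwards through the cycle of a periodic point.\<close>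

lemma backward_orbit_exists:
  assumes "finite S" and "f ` S \<subseteq> S" and "S \<noteq> {}"
  shows "\<exists>q. range q \<subseteq> S \<and> (\<forall>t. f (q (Suc t)) = q t)"
proof -
  obtain x where "x \<in> S"
    using assms(3) by blast
  then obtain c m where "c \<in> S" "m > 0" and cycle: "(f ^^ m) c = c"
    using periodic_point_exists[OF assms(1,2)] by blast
  have orbit_in: "(f ^^ t) c \<in> S" for t
    by (induction t) (use assms(2) \<open>c \<in> S\<close> in auto)
  define q where "q t = (f ^^ ((m - 1) * t)) c" for t
  have "f (q (Suc t)) = q t" for t
  proof -
    have "f (q (Suc t)) = (f ^^ Suc ((m - 1) * Suc t)) c"
      by (simp add: q_def)
    also have "Suc ((m - 1) * Suc t) = (m - 1) * t + m"
      using \<open>m > 0\<close> by simp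
    also have "(f ^^ ((m - 1) * t + m)) c = q t"
      by (simp add: q_def funpow_add cycle)
    finally show ?thesis .
  qed
  moreover have "range q \<subseteq> S"
    using orbit_in by (auto simp: q_def)
  ultimately show ?thesis
    by blast
qed

lemma Nil_in_tree: "[] \<in> tree k"
  by (simp add: tree_def)

lemma snoc_in_tree: "x \<in> tree k \<Longrightarrow> g \<in> {1..k} \<Longrightarrow> x @ [g] \<in> tree k"
  by (auto simp: tree_def)

lemma take_in_tree: "x \<in> tree k \<Longrightarrow> take n x \<in> tree k"
  unfolding tree_def using set_take_subset[of n x] by blast

lemma drop_in_tree: "x \<in> tree k \<Longrightarrow> drop n x \<in> tree k"
  unfolding tree_def using set_drop_subset[of n x] by blast

lemma XA_labelD: "lam \<in> XA k d A \<Longrightarrow> x \<in> tree k \<Longrightarrow> lam x \<in> {1..d}"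
  unfolding XA_def by auto

lemma XA_edgeD:
  "lam \<in> XA k d A \<Longrightarrow> x \<in> tree k \<Longrightarrow> g \<in> {1..k} \<Longrightarrow> A (lam x) (lam (x @ [g])) > 0"
  unfolding XA_def by auto

lemma arrival_subset_PiE: "arrival k d A i (level k n) \<subseteq> level k n \<rightarrow>\<^sub>E {1..d}"
proof
  fix f
  assume "f \<in> arrival k d A i (level k n)"
  then obtain lam where "lam \<in> XA k d A" and f: "f = restrict lam (level k n)"
    unfolding arrival_def by blast
  then have "\<forall>x\<in>level k n. lam x \<in> {1..d}"
    using XA_labelD by (auto simp: level_def)
  then show "f \<in> level k n \<rightarrow>\<^sub>E {1..d}"
    unfolding f by simp
qed

lemma XA_nonempty:
  assumes "d \<ge> 1" and "\<forall>j\<in>{1..d}. \<exists>i\<in>{1..d}. A i j > 0"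
  shows "XA k d A \<noteq> {}"
proof -
  obtain p where p: "\<forall>j\<in>{1..d}. p j \<in> {1..d} \<and> A (p j) j > 0"
    using assms(2) by metis
  then have "p ` {1..d} \<subseteq> {1..d}"
    by blast
  moreover have "{1..d} \<noteq> {}"
    using assms(1) by simp
  ultimately obtain q where q_in: "range q \<subseteq> {1..d}" and q_pred: "\<forall>t. p (q (Suc t)) = q t"
    using backward_orbit_exists[OF finite_atLeastAtMost] by metis
  define lam where "lam = restrict (\<lambda>x. q (length x)) (tree k)"
  have "lam \<in> tree k \<rightarrow>\<^sub>E {1..d}"
    using q_in by (auto simp: lam_def)
  moreover have "A (lam x) (lam (x @ [g])) > 0" if "x \<in> tree k" "g \<in> {1..k}" for x g
  proof -
    have "lam x = p (lam (x @ [g]))"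
      using that snoc_in_tree[OF that] q_pred by (simp add: lam_def)
    then show ?thesis
      using p q_in snoc_in_tree[OF that] by (auto simp: lam_def)
  qed
  ultimately have "lam \<in> XA k d A"
    unfolding XA_def by blast
  then show ?thesis by blast
qed

lemma XA_any_root_if_inP:
  assumes "inP k n d A" and "lam \<in> XA k d A" and "j \<in> {1..d}"
  shows "\<exists>L\<in>XA k d A. L [] = j"
proof -
  have "restrict lam (level k n) \<in> arrival k d A (lam []) (level k n)"
    using assms(2) unfolding arrival_def by blast
  also have "\<dots> = arrival k d A j (level k n)"
    using assms XA_labelD[OF assms(2) Nil_in_tree] unfolding inP_def by blast
  finally show ?thesis
    unfolding arrival_def by blast
qed

lemma common_predecessor_if_inPstar:
  assumes "inPstar k n d A" and "n \<ge> 1" and "k \<ge> 1" and a: "a \<in> {1..k} \<rightarrow> {1..d}"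
  shows "\<exists>i\<in>{1..d}. \<forall>j\<in>{1..k}. A i (a j) > 0"
proof -
  define f where "f = restrict (\<lambda>w. a (last w)) (level k n)"
  have "last w \<in> {1..k}" if "w \<in> level k n" for w
  proof -
    have "w \<noteq> []" and "set w \<subseteq> {1..k}"
      using that \<open>n \<ge> 1\<close> by (auto simp: level_def tree_def)
    then show ?thesis
      using last_in_set by blast
  qed
  then have "f \<in> level k n \<rightarrow>\<^sub>E {1..d}"
    using a unfolding f_def by auto
  moreover have "a 1 \<in> {1..d}"
    using a \<open>k \<ge> 1\<close> by auto
  ultimately have "f \<in> arrival k d A (a 1) (level k n)"
    using assms(1) unfolding inPstar_def by blast
  then obtain lam where lam: "lam \<in> XA k d A" and f: "restrict lam (level k n) = f"
    unfolding arrival_def by blast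
  define x where "x = replicate (n - 1) (1::nat)"
  have x: "x \<in> tree k"
    using \<open>k \<ge> 1\<close> by (auto simp: x_def tree_def)
  have "A (lam x) (a j) > 0" if j: "j \<in> {1..k}" for j
  proof -
    have "x @ [j] \<in> level k n"
      using snoc_in_tree[OF x j] \<open>n \<ge> 1\<close> by (simp add: level_def x_def)
    then have "lam (x @ [j]) = a j"
      using fun_cong[OF f, of "x @ [j]"] by (simp add: f_def)
    then show ?thesis
      using XA_edgeD[OF lam x j] by simp
  qed
  then show ?thesis
    using XA_labelD[OF lam x] by blast
qed

definition predecessor_choice :: "nat \<Rightarrow> nat \<Rightarrow> (nat \<Rightarrow> nat \<Rightarrow> real) \<Rightarrow> ((nat \<Rightarrow> nat) \<Rightarrow> nat) \<Rightarrow> bool"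
  where "predecessor_choice k d A pr \<longleftrightarrow>
    (\<forall>a\<in>{1..k} \<rightarrow> {1..d}. pr a \<in> {1..d} \<and> (\<forall>j\<in>{1..k}. A (pr a) (a j) > 0))"

fun lift_labels :: "((nat \<Rightarrow> nat) \<Rightarrow> nat) \<Rightarrow> (nat list \<Rightarrow> nat) \<Rightarrow> nat \<Rightarrow> nat list \<Rightarrow> nat"
  where
    "lift_labels pr f 0 x = f x"
  | "lift_labels pr f (Suc t) x = pr (\<lambda>j. lift_labels pr f t (x @ [j]))"

lemma lift_labels_in:
  assumes pr: "predecessor_choice k d A pr" and f: "f \<in> level k n \<rightarrow>\<^sub>E {1..d}"
  shows "x \<in> tree k \<Longrightarrow> length x + t = n \<Longrightarrow> lift_labels pr f t x \<in> {1..d}"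
proof (induction t arbitrary: x)
  case 0
  then show ?case
    using f by (auto simp: level_def)
next
  case (Suc t)
  then have "(\<lambda>j. lift_labels pr f t (x @ [j])) \<in> {1..k} \<rightarrow> {1..d}"
    using snoc_in_tree by auto
  then show ?case
    using pr by (simp add: predecessor_choice_def)
qed

definition graft :: "nat \<Rightarrow> nat \<Rightarrow> ((nat \<Rightarrow> nat) \<Rightarrow> nat) \<Rightarrow> (nat list \<Rightarrow> nat)
    \<Rightarrow> (nat \<Rightarrow> nat list \<Rightarrow> nat) \<Rightarrow> nat list \<Rightarrow> nat"
  where "graft k n pr f L x =
    (if x \<notin> tree k then undefined
     else if length x < n then lift_labels pr f (n - length x) x
     else L (f (take n x)) (drop n x))"

context
  fixes k n d A pr f L
  assumes pr: "predecessor_choice k d A pr"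
    and f: "f \<in> level k n \<rightarrow>\<^sub>E {1..d}"
    and L: "\<forall>j\<in>{1..d}. L j \<in> XA k d A \<and> L j [] = j"
begin

lemma graft_upper:
  assumes "x \<in> tree k" and "length x \<le> n"
  shows "graft k n pr f L x = lift_labels pr f (n - length x) x"
proof (cases "length x < n")
  case False
  then have "x \<in> level k n"
    using assms by (simp add: level_def)
  then show ?thesis
    using False assms f L by (auto simp: graft_def)
qed (use assms in \<open>simp add: graft_def\<close>)

lemma graft_lower:
  assumes "x \<in> tree k" and "length x \<ge> n"
  shows "graft k n pr f L x = L (f (take n x)) (drop n x)"
    and "L (f (take n x)) \<in> XA k d A"
proof -
  show "graft k n pr f L x = L (f (take n x)) (drop n x)"
    using assms by (simp add: graft_def)
  have "take n x \<in> level k n"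
    using assms take_in_tree by (auto simp: level_def)
  then show "L (f (take n x)) \<in> XA k d A"
    using f L by auto
qed

lemma graft_label_in:
  assumes x: "x \<in> tree k"
  shows "graft k n pr f L x \<in> {1..d}"
proof (cases "length x \<le> n")
  case True
  then show ?thesis
    using lift_labels_in[OF pr f x, of "n - length x"] graft_upper[OF x True] by simp
next
  case False
  then show ?thesis
    using graft_lower[OF x] XA_labelD[OF _ drop_in_tree[OF x]] by simp
qed

lemma graft_edge:
  assumes x: "x \<in> tree k" and g: "g \<in> {1..k}"
  shows "A (graft k n pr f L x) (graft k n pr f L (x @ [g])) > 0"
proof (cases "length x < n")
  case True
  define t where "t = n - Suc (length x)"
  have t: "n - length x = Suc t"
    using True by (simp add: t_def)
  define a where "a = (\<lambda>j. lift_labels pr f t (x @ [j]))"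
  have "a \<in> {1..k} \<rightarrow> {1..d}"
  proof
    fix j
    assume "j \<in> {1..k}"
    then show "a j \<in> {1..d}"
      unfolding a_def using lift_labels_in[OF pr f snoc_in_tree[OF x], of j t] t by simp
  qed
  moreover have "graft k n pr f L x = pr a"
    using graft_upper[OF x] True t by (simp add: a_def)
  moreover have "graft k n pr f L (x @ [g]) = a g"
    using graft_upper[OF snoc_in_tree[OF x g]] True by (simp add: a_def t_def)
  ultimately show ?thesis
    using pr g by (simp add: predecessor_choice_def)
next
  case False
  then show ?thesis
    using graft_lower[OF x] graft_lower[OF snoc_in_tree[OF x g]]
      XA_edgeD[OF _ drop_in_tree[OF x] g] by simp
qed

lemma graft_in_XA: "graft k n pr f L \<in> XA k d A"
proof -
  have "graft k n pr f L \<in> tree k \<rightarrow>\<^sub>E {1..d}"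
  proof (rule PiE_I)
    show "graft k n pr f L x = undefined" if "x \<notin> tree k" for x
      using that by (simp add: graft_def)
  qed (rule graft_label_in)
  then show ?thesis
    unfolding XA_def using graft_edge by blast
qed

lemma graft_restrict_level: "restrict (graft k n pr f L) (level k n) = f"
proof
  fix x
  show "restrict (graft k n pr f L) (level k n) x = f x"
  proof (cases "x \<in> level k n")
    case True
    then show ?thesis
      using graft_upper[of x] by (simp add: level_def)
  next
    case False
    then show ?thesis
      using PiE_arb[OF f False] by simp
  qed
qed

lemma labelling_in_some_arrival: "\<exists>i\<in>{1..d}. f \<in> arrival k d A i (level k n)"
proof -
  have "f \<in> arrival k d A (graft k n pr f L []) (level k n)"
    unfolding arrival_def
    by (intro CollectI exI[of _ "graft k n pr f L"]) (simp add: graft_in_XA graft_restrict_level)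
  then show ?thesis
    using XA_labelD[OF graft_in_XA Nil_in_tree] by blast
qed

end

lemma inPstar_if_inP_and_predecessor_choice:
  assumes P: "inP k n d A" and pr: "predecessor_choice k d A pr" and "k \<ge> 1"
  shows "inPstar k n d A"
proof -
  have preds: "\<forall>j\<in>{1..d}. \<exists>i\<in>{1..d}. A i j > 0"
  proof
    fix j
    assume "j \<in> {1..d}"
    then have "(\<lambda>_. j) \<in> {1..k} \<rightarrow> {1..d}"
      by simp
    then have "pr (\<lambda>_. j) \<in> {1..d}" and "\<forall>g\<in>{1..k}. A (pr (\<lambda>_. j)) j > 0"
      using pr unfolding predecessor_choice_def by blast+
    then show "\<exists>i\<in>{1..d}. A i j > 0"
      using \<open>k \<ge> 1\<close> by auto
  qed
  have "\<exists>L\<in>XA k d A. L [] = j" if j: "j \<in> {1..d}" for j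
  proof -
    have "XA k d A \<noteq> {}"
      using XA_nonempty[OF _ preds] j by simp
    then obtain lam where "lam \<in> XA k d A"
      by blast
    then show ?thesis
      using XA_any_root_if_inP[OF P _ j] by blast
  qed
  then obtain L where "\<forall>j\<in>{1..d}. L j \<in> XA k d A \<and> L j [] = j"
    by metis
  then have "\<forall>f\<in>level k n \<rightarrow>\<^sub>E {1..d}. \<exists>i\<in>{1..d}. f \<in> arrival k d A i (level k n)"
    using labelling_in_some_arrival[OF pr] by blast
  then show ?thesis
    using P arrival_subset_PiE unfolding inP_def inPstar_def by blast
qed

theorem proposition2p6:
  fixes k n d :: nat and A :: "nat \<Rightarrow> nat \<Rightarrow> real"
  assumes "k \<ge> 1" and "n \<ge> 1"
    and "\<forall>i \<in> {1..d}. \<forall>j \<in> {1..d}. A i j \<ge> 0"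
  shows "inPstar k n d A \<longleftrightarrow>
    (inP k n d A \<and>
     (\<forall>a \<in> {1..k} \<rightarrow> {1..d}. \<exists>i \<in> {1..d}. \<forall>j \<in> {1..k}. A i (a j) > 0))"
proof
  assume H: "inPstar k n d A"
  then have "inP k n d A"
    by (simp add: inP_def inPstar_def)
  then show "inP k n d A \<and> (\<forall>a \<in> {1..k} \<rightarrow> {1..d}. \<exists>i \<in> {1..d}. \<forall>j \<in> {1..k}. A i (a j) > 0)"
    using common_predecessor_if_inPstar[OF H assms(2,1)] by blast
next
  assume H: "inP k n d A \<and> (\<forall>a \<in> {1..k} \<rightarrow> {1..d}. \<exists>i \<in> {1..d}. \<forall>j \<in> {1..k}. A i (a j) > 0)"
  then obtain pr where "predecessor_choice k d A pr"
    unfolding predecessor_choice_def by metis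
  then show "inPstar k n d A"
    using inPstar_if_inP_and_predecessor_choice H assms(1) by blast
qed

end
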